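(* Consider the second-stage problem defined in the context, and suppose all its right-hand-side data are integers: the initial fill levels $d_i^0$, capacities $\overline{d}_i$, demands $f_{i,j}^{t,k}(\xi)$, prescribed in-progress journeys $w_{i,j}^{t,k}$ ($1-K\le t\le 0$), and load/unload actions $y_i^{+,t},y_i^{-,t}$. Then, even when the integrality constraint on $w$ is relaxed (so $w$ is real-valued), the resulting linear program, if feasible, has an integer-valued optimal solution.
   Context: Setting: a directed graph $\mathcal{G}_\text{SV}=(\mathcal{N}_\text{SV},\mathcal{E}_\text{SV})$ of possible shared-vehicle (SV) journeys, horizon $T$, maximum journey duration $K$, station capacities $\overline{d}_i$, initial fill levels $d_i^0$, and given load/unload actions $y_i^{+,t},y_i^{-,t}$ for $i\in\mathcal{N}_\text{SV}$, $t=1,\dots,T$ (zero at nodes where no action is defined). For a realization $\xi$, $f_{i,j}^{t,k}(\xi)\in\mathbb{N}$ is the demand for journeys from $i$ to $j$ starting at time $t$ with duration $k$, and $l_{i,j}^{t,k}(\cdot;\xi)$ is a convex piecewise affine function passing through the origin with breakpoints at the integers. The second-stage problem is $$V(y,\xi):=\min_w\ \sum_{t=1}^T\sum_{(i,j)\in\mathcal{E}_\text{SV}}\sum_{k=0}^K l_{i,j}^{t,k}(f_{i,j}^{t,k}(\xi)-w_{i,j}^{t,k};\xi)$$ subject to, for all $t=1,\dots,T$ and $i\in\mathcal{N}_\text{SV}$, $$0\le d_i^0+\sum_{\tau=1}^t\Big[\sum_{k=0}^K\Big(\sum_{(j,i)\in\mathcal{E}_\text{SV}}w_{j,i}^{\tau-k,k}-\sum_{(i,j)\in\mathcal{E}_\text{SV}}w_{i,j}^{\tau,k}\Big)+y_i^{-,\tau}-y_i^{+,\tau}\Big]\le\overline{d}_i,$$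 $0\le w_{i,j}^{t,k}\le f_{i,j}^{t,k}(\xi)$ for $t=1,\dots,T$, $k=0,\dots,K$, $(i,j)\in\mathcal{E}_\text{SV}$, with $w_{i,j}^{t,k}$ given (fixed data) for $1-K\le t\le 0$, $-t<k\le K$, and $w_{i,j}^{t,k}\in\mathbb{Z}$. *)

theory Defs
  imports "HOL-Analysis.Analysis"
begin

definition cvx_pwa_int :: "(real \<Rightarrow> real) \<Rightarrow> bool" where
  "cvx_pwa_int l \<longleftrightarrow> l 0 = 0 \<and> convex_on UNIV l \<and>
     (\<forall>n::int. \<forall>x. real_of_int n \<le> x \<and> x \<le> real_of_int n + 1 \<longrightarrow>
        l x = l (real_of_int n) + (x - real_of_int n) * (l (real_of_int n + 1) - l (real_of_int n)))"

definition journey :: "(int \<Rightarrow> nat \<Rightarrow> 'n \<times> 'n \<Rightarrow> int) \<Rightarrow> (int \<Rightarrow> nat \<Rightarrow> 'n \<times> 'n \<Rightarrow> real)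
     \<Rightarrow> int \<Rightarrow> nat \<Rightarrow> 'n \<times> 'n \<Rightarrow> real" where
  "journey w0 w t k e = (if t \<le> 0 then real_of_int (w0 t k e) else w t k e)"

definition fill_level ::
  "('n \<times> 'n) set \<Rightarrow> nat \<Rightarrow> ('n \<Rightarrow> int) \<Rightarrow> ('n \<Rightarrow> int \<Rightarrow> int) \<Rightarrow> ('n \<Rightarrow> int \<Rightarrow> int)
   \<Rightarrow> (int \<Rightarrow> nat \<Rightarrow> 'n \<times> 'n \<Rightarrow> int) \<Rightarrow> (int \<Rightarrow> nat \<Rightarrow> 'n \<times> 'n \<Rightarrow> real) \<Rightarrow> 'n \<Rightarrow> int \<Rightarrow> real" where
  "fill_level E K d0 yplus yminus w0 w i t =
     real_of_int (d0 i) +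
     (\<Sum>\<tau>\<in>{1..t}.
        (\<Sum>k\<in>{0..K}.
            (\<Sum>j\<in>{j. (j, i) \<in> E}. journey w0 w (\<tau> - int k) k (j, i))
          - (\<Sum>j\<in>{j. (i, j) \<in> E}. w \<tau> k (i, j)))
        + real_of_int (yminus i \<tau>) - real_of_int (yplus i \<tau>))"

definition feasible_relaxed ::
  "'n set \<Rightarrow> ('n \<times> 'n) set \<Rightarrow> nat \<Rightarrow> nat \<Rightarrow> ('n \<Rightarrow> int) \<Rightarrow> ('n \<Rightarrow> int)
   \<Rightarrow> ('n \<Rightarrow> int \<Rightarrow> int) \<Rightarrow> ('n \<Rightarrow> int \<Rightarrow> int) \<Rightarrow> (int \<Rightarrow> nat \<Rightarrow> 'n \<times> 'n \<Rightarrow> nat)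
   \<Rightarrow> (int \<Rightarrow> nat \<Rightarrow> 'n \<times> 'n \<Rightarrow> int) \<Rightarrow> (int \<Rightarrow> nat \<Rightarrow> 'n \<times> 'n \<Rightarrow> real) \<Rightarrow> bool" where
  "feasible_relaxed N E T K d0 dbar yplus yminus f w0 w \<longleftrightarrow>
     (\<forall>t\<in>{1..int T}. \<forall>i\<in>N.
        0 \<le> fill_level E K d0 yplus yminus w0 w i t \<and>
        fill_level E K d0 yplus yminus w0 w i t \<le> real_of_int (dbar i)) \<and>
     (\<forall>t\<in>{1..int T}. \<forall>k\<in>{0..K}. \<forall>e\<in>E. 0 \<le> w t k e \<and> w t k e \<le> real (f t k e))"

definition objective ::
  "('n \<times> 'n) set \<Rightarrow> nat \<Rightarrow> nat \<Rightarrow> (int \<Rightarrow> nat \<Rightarrow> 'n \<times> 'n \<Rightarrow> real \<Rightarrow> real)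
   \<Rightarrow> (int \<Rightarrow> nat \<Rightarrow> 'n \<times> 'n \<Rightarrow> nat) \<Rightarrow> (int \<Rightarrow> nat \<Rightarrow> 'n \<times> 'n \<Rightarrow> real) \<Rightarrow> real" where
  "objective E T K l f w =
     (\<Sum>t\<in>{1..int T}. \<Sum>e\<in>E. \<Sum>k\<in>{0..K}. l t k e (real (f t k e) - w t k e))"

end

theory Submission
  imports Defs
begin

text \<open>The relaxed second-stage problem is a minimum-cost flow problem on a time-expanded network:
  journeys are arcs between (station, period) vertices and inventory arcs carry the fill levels from
  one period to the next, all with integral bounds and integral supplies. Any feasible flow can be
  rounded to an integral one of no larger cost. Every vertex other than the root meets the arcs
  with fractional flow at least twice, so these arcs carry a nonzero circulation; pushing flow along
  it in either direction until some arc becomes integral yields two feasible flows with fewer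
  fractional arcs. The original flow lies between them, inside a single unit cell on every arc, where
  the losses are affine, so one of them costs no more. Since there are only finitely many bounded
  integral flows, one of them is optimal among all feasible ones.\<close>

section \<open>Rounding flows with integral net inflows\<close>

lemma homogeneous_system_nontrivial_solution:
  fixes M :: "'q \<Rightarrow> 'x \<Rightarrow> real"
  assumes "finite Q" "finite X" "card Q < card X"
  shows "\<exists>d. (\<forall>x. x \<notin> X \<longrightarrow> d x = 0) \<and> (\<exists>x\<in>X. d x \<noteq> 0) \<and> (\<forall>q\<in>Q. (\<Sum>x\<in>X. M q x * d x) = 0)"
  using assms
proof (induction Q arbitrary: X M rule: finite_induct)
  case empty
  then obtain x0 where "x0 \<in> X" by (metis card.empty card_gt_0_iff ex_in_conv)
  then show ?case by (intro exI[of _ "\<lambda>x. if x = x0 then 1 else 0"]) auto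
next
  case (insert q Q)
  show ?case
  proof (cases "\<forall>x\<in>X. M q x = 0")
    case True
    have "card Q < card X" using insert by simp
    with insert.IH[OF insert(4)] obtain d where
      "\<forall>x. x \<notin> X \<longrightarrow> d x = 0" "\<exists>x\<in>X. d x \<noteq> 0" "\<forall>q\<in>Q. (\<Sum>x\<in>X. M q x * d x) = 0"
      by blast
    with True show ?thesis by (intro exI[of _ d]) auto
  next
    case False
    then obtain x0 where x0: "x0 \<in> X" "M q x0 \<noteq> 0" by auto
    \<comment> \<open>Eliminate the unknown x0 using equation q, and solve the remaining system on X - {x0}.\<close>
    define X' where "X' = X - {x0}"
    define M' where "M' = (\<lambda>q' x. M q' x - M q' x0 * M q x / M q x0)"
    have "finite X'" "card Q < card X'" using insert x0 by (simp_all add: X'_def)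
    with insert.IH obtain d' where d':
      "\<forall>x. x \<notin> X' \<longrightarrow> d' x = 0" "\<exists>x\<in>X'. d' x \<noteq> 0" "\<forall>q'\<in>Q. (\<Sum>x\<in>X'. M' q' x * d' x) = 0"
      by blast
    define S where "S = (\<Sum>x\<in>X'. M q x * d' x)"
    define d where "d = d'(x0 := - S / M q x0)"
    have split: "(\<Sum>x\<in>X. g x * d x) = - g x0 * S / M q x0 + (\<Sum>x\<in>X'. g x * d' x)" for g
    proof -
      have "(\<Sum>x\<in>X. g x * d x) = g x0 * d x0 + (\<Sum>x\<in>X'. g x * d x)"
        unfolding X'_def using insert(4) x0(1) by (rule sum.remove)
      also have "(\<Sum>x\<in>X'. g x * d x) = (\<Sum>x\<in>X'. g x * d' x)"
        by (rule sum.cong) (auto simp: d_def X'_def)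
      finally show ?thesis by (simp add: d_def)
    qed
    have "(\<Sum>x\<in>X. M q' x * d x) = 0" if "q' \<in> Q" for q'
    proof -
      have "(\<Sum>x\<in>X'. M' q' x * d' x) = (\<Sum>x\<in>X'. M q' x * d' x) - M q' x0 / M q x0 * S"
        by (simp add: M'_def S_def algebra_simps sum_subtractf sum_distrib_left)
      with d'(3) that show ?thesis by (simp add: split)
    qed
    moreover have "(\<Sum>x\<in>X. M q x * d x) = 0"
      using x0(2) by (simp add: split S_def)
    moreover have "\<forall>x. x \<notin> X \<longrightarrow> d x = 0" "\<exists>x\<in>X. d x \<noteq> 0"
      using d'(1,2) x0(1) by (auto simp: d_def X'_def)
    ultimately show ?thesis by (intro exI[of _ d]) auto
  qed
qed

definition net_inflow :: "'a set \<Rightarrow> ('a \<Rightarrow> 'v) \<Rightarrow> ('a \<Rightarrow> 'v) \<Rightarrow> ('a \<Rightarrow> real) \<Rightarrow> 'v \<Rightarrow> real" where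
  "net_inflow A head tail z v = (\<Sum>a\<in>{a\<in>A. head a = v}. z a) - (\<Sum>a\<in>{a\<in>A. tail a = v}. z a)"

lemma net_inflow_as_sum:
  assumes "finite A"
  shows "net_inflow A head tail z v
    = (\<Sum>a\<in>A. ((if head a = v then 1 else 0) - (if tail a = v then 1 else 0)) * z a)"
  using assms
  by (simp add: net_inflow_def sum.inter_filter sum_subtractf[symmetric]) (rule sum.cong, auto)

lemma net_inflow_add_scaled:
  "finite A \<Longrightarrow> net_inflow A head tail (\<lambda>a. x a + s * d a) v = net_inflow A head tail x v + s * net_inflow A head tail d v"
  by (simp add: net_inflow_def sum.distrib sum_distrib_left algebra_simps)

lemma net_inflow_restrict:
  assumes "finite A" "F \<subseteq> A" "\<forall>a. a \<notin> F \<longrightarrow> z a = 0"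
  shows "net_inflow A head tail z v = net_inflow F head tail z v"
proof -
  have "(\<Sum>a\<in>{a\<in>A. g a = v}. z a) = (\<Sum>a\<in>{a\<in>F. g a = v}. z a)" for g
    by (rule sum.mono_neutral_right) (use assms in auto)
  then show ?thesis by (simp add: net_inflow_def)
qed

lemma net_inflow_outside:
  "v \<notin> head ` A \<union> tail ` A \<Longrightarrow> net_inflow A head tail z v = 0"
  unfolding net_inflow_def by (metis (mono_tags, lifting) Collect_empty_eq UnCI image_eqI sum.empty diff_self)

lemma sum_net_inflow:
  assumes "finite A" "finite U" "head ` A \<union> tail ` A \<subseteq> U"
  shows "(\<Sum>v\<in>U. net_inflow A head tail z v) = 0"
  using sum.group[OF assms(1,2), of head z] sum.group[OF assms(1,2), of tail z] assms(3)
  by (simp add: net_inflow_def sum_subtractf)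

lemma nonzero_circulation_exists:
  assumes fin: "finite F" and ne: "F \<noteq> {}"
    and deg: "\<And>v. v \<noteq> r \<Longrightarrow> card {a\<in>F. head a = v} + card {a\<in>F. tail a = v} \<noteq> 1"
  shows "\<exists>d. (\<forall>a. a \<notin> F \<longrightarrow> d a = 0) \<and> (\<exists>a\<in>F. d a \<noteq> 0) \<and> (\<forall>v. net_inflow F head tail d v = 0)"
proof -
  define U where "U = head ` F \<union> tail ` F"
  define dg where "dg v = card {a\<in>F. head a = v} + card {a\<in>F. tail a = v}" for v
  obtain a0 where "a0 \<in> F" using ne by auto
  define u0 where "u0 = (if r \<in> U then r else head a0)"
  define Q where "Q = U - {u0}"
  have fU: "finite U" using fin by (simp add: U_def)
  have u0U: "u0 \<in> U" using \<open>a0 \<in> F\<close> by (simp add: U_def u0_def)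
  \<comment> \<open>Every arc has two ends and every vertex of Q is incident to at least two arcs,
    so there are fewer conservation equations on Q than arcs.\<close>
  have "(\<Sum>v\<in>U. dg v) = 2 * card F"
    using sum.group[OF fin fU, of head "\<lambda>_. 1::nat"] sum.group[OF fin fU, of tail "\<lambda>_. 1::nat"]
    by (simp add: U_def dg_def sum.distrib)
  moreover have "(\<Sum>v\<in>U. dg v) = dg u0 + (\<Sum>v\<in>Q. dg v)"
    unfolding Q_def using fU u0U by (rule sum.remove)
  moreover have "dg v \<ge> 1" if "v \<in> U" for v
    using that fin unfolding U_def dg_def by (auto simp: card_gt_0_iff Suc_le_eq)
  moreover have "dg v \<ge> 2" if "v \<in> Q" for v
  proof -
    have "v \<in> U" "v \<noteq> r" using that by (auto simp: Q_def u0_def)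
    with \<open>\<And>v. v \<in> U \<Longrightarrow> dg v \<ge> 1\<close> deg show ?thesis by (fastforce simp: dg_def)
  qed
  ultimately have "card Q < card F"
    using u0U sum_mono[of Q "\<lambda>_. 2" dg] by fastforce
  with homogeneous_system_nontrivial_solution[OF _ fin, of Q "\<lambda>v a. (if head a = v then 1 else 0) - (if tail a = v then 1 else 0)"]
  obtain d where d: "\<forall>a. a \<notin> F \<longrightarrow> d a = 0" "\<exists>a\<in>F. d a \<noteq> 0" "\<forall>v\<in>Q. net_inflow F head tail d v = 0"
    using fU by (auto simp: Q_def net_inflow_as_sum[OF fin])
  have "(\<Sum>v\<in>U. net_inflow F head tail d v) = net_inflow F head tail d u0 + (\<Sum>v\<in>Q. net_inflow F head tail d v)"
    unfolding Q_def using fU u0U by (rule sum.remove)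
  with sum_net_inflow[OF fin fU] d(3) have "net_inflow F head tail d u0 = 0"
    by (simp add: U_def)
  with d net_inflow_outside[of _ head F tail d] have "\<forall>v. net_inflow F head tail d v = 0"
    by (metis DiffI Q_def U_def singletonD)
  with d(1,2) show ?thesis by blast
qed

lemma fractional_arcs_degree_ne_1:
  assumes "finite A" and int: "net_inflow A head tail x v \<in> \<int>"
  defines "F \<equiv> {a\<in>A. x a \<notin> \<int>}"
  shows "card {a\<in>F. head a = v} + card {a\<in>F. tail a = v} \<noteq> 1"
proof
  have finF: "finite F" using \<open>finite A\<close> by (simp add: F_def)
  assume one: "card {a\<in>F. head a = v} + card {a\<in>F. tail a = v} = 1"
  have split: "(\<Sum>a\<in>{a\<in>A. g a = v}. x a)
      = (\<Sum>a\<in>{a\<in>F. g a = v}. x a) + (\<Sum>a\<in>{a\<in>A. g a = v \<and> x a \<in> \<int>}. x a)" for g :: "'a \<Rightarrow> 'b"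
  proof -
    have "{a\<in>A. g a = v} = {a\<in>F. g a = v} \<union> {a\<in>A. g a = v \<and> x a \<in> \<int>}" by (auto simp: F_def)
    then show ?thesis using \<open>finite A\<close> by (simp add: sum.union_disjoint F_def disjoint_iff)
  qed
  have integral_rest: "(\<Sum>a\<in>{a\<in>A. g a = v \<and> x a \<in> \<int>}. x a) \<in> \<int>" for g :: "'a \<Rightarrow> 'b"
    by (rule Ints_sum) simp
  have "net_inflow F head tail x v = net_inflow A head tail x v
      - (\<Sum>a\<in>{a\<in>A. head a = v \<and> x a \<in> \<int>}. x a) + (\<Sum>a\<in>{a\<in>A. tail a = v \<and> x a \<in> \<int>}. x a)"
    unfolding net_inflow_def split[of head] split[of tail] by simp
  then have "net_inflow F head tail x v \<in> \<int>"
    using int integral_rest by (simp add: Ints_add Ints_diff)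
  moreover have "\<exists>a\<in>F. net_inflow F head tail x v = x a \<or> net_inflow F head tail x v = - x a"
  proof (cases "card {a\<in>F. head a = v} = 1")
    case True
    then obtain a where a: "{a\<in>F. head a = v} = {a}" by (auto simp: card_1_singleton_iff)
    have "{a\<in>F. tail a = v} = {}" using True one finF by simp
    with a have "net_inflow F head tail x v = x a" by (simp only: net_inflow_def) simp
    with a show ?thesis by blast
  next
    case False
    then have "card {a\<in>F. tail a = v} = 1" using one by simp
    then obtain a where a: "{a\<in>F. tail a = v} = {a}" by (auto simp: card_1_singleton_iff)
    have "card {a\<in>F. head a = v} = 0" using False one by simp
    then have "{a\<in>F. head a = v} = {}" using finF by simp
    with a have "net_inflow F head tail x v = - x a" by (simp only: net_inflow_def) simp
    with a show ?thesis by blast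
  qed
  ultimately obtain a where "a \<in> F" "x a \<in> \<int> \<or> - x a \<in> \<int>"
    by metis
  then show False
    by (auto simp: F_def)
qed

lemma exists_step_to_cell_boundary:
  fixes x d :: "'a \<Rightarrow> real"
  assumes "finite G" "G \<noteq> {}" "\<And>a. a \<in> G \<Longrightarrow> x a \<notin> \<int> \<and> d a \<noteq> 0"
  shows "\<exists>s>0. (\<forall>a\<in>G. of_int \<lfloor>x a\<rfloor> \<le> x a + s * d a \<and> x a + s * d a \<le> of_int \<lfloor>x a\<rfloor> + 1)
              \<and> (\<exists>a\<in>G. x a + s * d a \<in> \<int>)"
proof -
  define bound :: "'a \<Rightarrow> real" where "bound a = (if d a > 0 then of_int \<lfloor>x a\<rfloor> + 1 else of_int \<lfloor>x a\<rfloor>)" for a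
  define s where "s = Min ((\<lambda>a. (bound a - x a) / d a) ` G)"
  have frac: "of_int \<lfloor>x a\<rfloor> < x a" "x a < of_int \<lfloor>x a\<rfloor> + 1" if "a \<in> G" for a
    using assms(3)[OF that] of_int_floor_le[of "x a"] by (auto simp: order.order_iff_strict)
  have "(bound a - x a) / d a > 0" if "a \<in> G" for a
    using frac[OF that] assms(3)[OF that] by (auto simp: bound_def divide_pos_pos divide_neg_neg)
  then have "s > 0"
    using assms(1,2) by (simp add: s_def)
  moreover have "of_int \<lfloor>x a\<rfloor> \<le> x a + s * d a \<and> x a + s * d a \<le> of_int \<lfloor>x a\<rfloor> + 1" if "a \<in> G" for a
  proof -
    have "s \<le> (bound a - x a) / d a" using assms(1) that by (simp add: s_def)
    show ?thesis
    proof (cases "d a > 0")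
      case True
      with \<open>s \<le> _\<close> have "s * d a \<le> of_int \<lfloor>x a\<rfloor> + 1 - x a" by (simp add: bound_def pos_le_divide_eq)
      moreover have "0 \<le> s * d a" using True \<open>s > 0\<close> by simp
      ultimately show ?thesis using frac[OF that] by linarith
    next
      case False
      then have "d a < 0" using assms(3)[OF that] by simp
      with \<open>s \<le> _\<close> have "of_int \<lfloor>x a\<rfloor> - x a \<le> s * d a" by (simp add: bound_def neg_le_divide_eq)
      moreover have "s * d a \<le> 0" using \<open>d a < 0\<close> \<open>s > 0\<close> by (simp add: mult_pos_neg less_imp_le)
      ultimately show ?thesis using frac[OF that] by linarith
    qed
  qed
  moreover have "\<exists>a\<in>G. x a + s * d a \<in> \<int>"
  proof -
    have "s \<in> (\<lambda>a. (bound a - x a) / d a) ` G"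
      unfolding s_def using assms(1,2) by (intro Min_in) auto
    then obtain a where "a \<in> G" "s = (bound a - x a) / d a" by blast
    then have "x a + s * d a = bound a" using assms(3) by simp
    moreover have "bound a \<in> \<int>" by (simp add: bound_def)
    ultimately show ?thesis using \<open>a \<in> G\<close> by metis
  qed
  ultimately show ?thesis by blast
qed

definition affine_on_unit_cells :: "(real \<Rightarrow> real) \<Rightarrow> bool" where
  "affine_on_unit_cells g \<longleftrightarrow> (\<forall>n::int. \<forall>x. of_int n \<le> x \<and> x \<le> of_int n + 1 \<longrightarrow>
     g x = g (of_int n) + (x - of_int n) * (g (of_int n + 1) - g (of_int n)))"

lemma cvx_pwa_int_imp_affine_on_unit_cells: "cvx_pwa_int g \<Longrightarrow> affine_on_unit_cells g"
  by (simp add: cvx_pwa_int_def affine_on_unit_cells_def)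

lemma affine_on_unit_cells_reflect:
  assumes "affine_on_unit_cells g" "c \<in> \<int>"
  shows "affine_on_unit_cells (\<lambda>y. g (c - y))"
  unfolding affine_on_unit_cells_def
proof (intro allI impI)
  fix n :: int and x :: real
  assume x: "of_int n \<le> x \<and> x \<le> of_int n + 1"
  obtain m where c: "c = of_int m" using assms(2) Ints_cases by blast
  have "of_int (m - n - 1) \<le> c - x \<and> c - x \<le> of_int (m - n - 1) + 1"
    using x by (simp add: c)
  with assms(1) have "g (c - x) = g (of_int (m - n - 1)) + (c - x - of_int (m - n - 1))
      * (g (of_int (m - n - 1) + 1) - g (of_int (m - n - 1)))"
    unfolding affine_on_unit_cells_def by blast
  then show "g (c - x) = g (c - of_int n) + (x - of_int n) * (g (c - (of_int n + 1)) - g (c - of_int n))"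
    by (simp add: c algebra_simps)
qed

lemma affine_on_unit_cells_convex_combination:
  assumes "affine_on_unit_cells g"
    and "of_int n \<le> x" "x \<le> of_int n + 1" "of_int n \<le> y" "y \<le> of_int n + 1" "0 \<le> u" "u \<le> 1"
  shows "g (u * x + (1 - u) * y) = u * g x + (1 - u) * g y"
proof -
  define D where "D = g (of_int n + 1) - g (of_int n)"
  note affine = assms(1)[unfolded affine_on_unit_cells_def, rule_format, of n, folded D_def]
  have "of_int n \<le> u * x + (1 - u) * y" "u * x + (1 - u) * y \<le> of_int n + 1"
    using convex_bound_le[of x "of_int n + 1" y u "1 - u"] convex_bound_le[of "-x" "- of_int n" "-y" u "1 - u"] assms
    by (auto simp: algebra_simps)
  then have "g (u * x + (1 - u) * y) = g (of_int n) + (u * x + (1 - u) * y - of_int n) * D"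
    using affine by blast
  also have "\<dots> = u * (g (of_int n) + (x - of_int n) * D) + (1 - u) * (g (of_int n) + (y - of_int n) * D)"
    by (simp add: algebra_simps)
  also have "\<dots> = u * g x + (1 - u) * g y"
    using affine[of x] affine[of y] assms(2-5) by simp
  finally show ?thesis .
qed

lemma min_sum_affine_opposite_shifts_le:
  fixes x d :: "'a \<Rightarrow> real"
  assumes affine: "\<forall>a\<in>A. affine_on_unit_cells (c a)" and "s1 > 0" "s2 > 0"
    and cell1: "\<And>a. a \<in> A \<Longrightarrow> d a \<noteq> 0 \<Longrightarrow>
      of_int \<lfloor>x a\<rfloor> \<le> x a + s1 * d a \<and> x a + s1 * d a \<le> of_int \<lfloor>x a\<rfloor> + 1"
    and cell2: "\<And>a. a \<in> A \<Longrightarrow> d a \<noteq> 0 \<Longrightarrow>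
      of_int \<lfloor>x a\<rfloor> \<le> x a + (- s2) * d a \<and> x a + (- s2) * d a \<le> of_int \<lfloor>x a\<rfloor> + 1"
  shows "min (\<Sum>a\<in>A. c a (x a + s1 * d a)) (\<Sum>a\<in>A. c a (x a + (- s2) * d a)) \<le> (\<Sum>a\<in>A. c a (x a))"
proof -
  define u where "u = s2 / (s1 + s2)"
  have u: "0 \<le> u" "u \<le> 1" "u * s1 - (1 - u) * s2 = 0"
    using assms(2,3) by (auto simp: u_def field_simps)
  have "c a (x a) = u * c a (x a + s1 * d a) + (1 - u) * c a (x a + (- s2) * d a)" if "a \<in> A" for a
  proof (cases "d a = 0")
    case False
    have "u * (x a + s1 * d a) + (1 - u) * (x a + (- s2) * d a) = x a + (u * s1 - (1 - u) * s2) * d a"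
      by (simp add: algebra_simps)
    then have "c a (x a) = c a (u * (x a + s1 * d a) + (1 - u) * (x a + (- s2) * d a))"
      using u(3) by simp
    also have "\<dots> = u * c a (x a + s1 * d a) + (1 - u) * c a (x a + (- s2) * d a)"
      using affine_on_unit_cells_convex_combination[of "c a" "\<lfloor>x a\<rfloor>"] affine that
        cell1[OF that False] cell2[OF that False] u(1,2)
      by blast
    finally show ?thesis .
  qed (simp add: algebra_simps)
  then have "(\<Sum>a\<in>A. c a (x a))
      = u * (\<Sum>a\<in>A. c a (x a + s1 * d a)) + (1 - u) * (\<Sum>a\<in>A. c a (x a + (- s2) * d a))"
    by (simp add: sum_distrib_left sum.distrib)
  then show ?thesis
    using convex_bound_le[of "- (\<Sum>a\<in>A. c a (x a + s1 * d a))"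
        "- min (\<Sum>a\<in>A. c a (x a + s1 * d a)) (\<Sum>a\<in>A. c a (x a + (- s2) * d a))"
        "- (\<Sum>a\<in>A. c a (x a + (- s2) * d a))" u "1 - u"] u(1,2)
    by simp
qed

lemma shift_along_circulation:
  fixes x d :: "'a \<Rightarrow> real" and lo hi :: "'a \<Rightarrow> int"
  assumes "finite A"
    and bounds: "\<forall>a\<in>A. of_int (lo a) \<le> x a \<and> x a \<le> of_int (hi a)"
    and support: "\<And>a. d a \<noteq> 0 \<Longrightarrow> a \<in> A \<and> x a \<notin> \<int>"
    and circulation: "\<And>v. net_inflow A head tail d v = 0"
    and cell: "\<And>a. d a \<noteq> 0 \<Longrightarrow> of_int \<lfloor>x a\<rfloor> \<le> x a + s * d a \<and> x a + s * d a \<le> of_int \<lfloor>x a\<rfloor> + 1"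
    and hit: "\<exists>a. d a \<noteq> 0 \<and> x a + s * d a \<in> \<int>"
  defines "y \<equiv> \<lambda>a. x a + s * d a"
  shows "\<forall>a\<in>A. of_int (lo a) \<le> y a \<and> y a \<le> of_int (hi a)"
    and "\<And>v. net_inflow A head tail y v = net_inflow A head tail x v"
    and "{a\<in>A. y a \<notin> \<int>} \<subset> {a\<in>A. x a \<notin> \<int>}"
proof -
  show "\<forall>a\<in>A. of_int (lo a) \<le> y a \<and> y a \<le> of_int (hi a)"
  proof
    fix a assume "a \<in> A"
    show "of_int (lo a) \<le> y a \<and> y a \<le> of_int (hi a)"
    proof (cases "d a = 0")
      case False
      have "lo a \<le> \<lfloor>x a\<rfloor>" "\<lceil>x a\<rceil> \<le> hi a"
        using bounds \<open>a \<in> A\<close> by (auto simp: le_floor_iff ceiling_le_iff)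
      moreover have "\<lceil>x a\<rceil> = \<lfloor>x a\<rfloor> + 1"
        using support[OF False] by (metis Ints_of_int ceiling_altdef)
      ultimately show ?thesis
        using cell[OF False] unfolding y_def by (smt (verit) of_int_le_iff of_int_add of_int_1)
    qed (use bounds \<open>a \<in> A\<close> y_def in auto)
  qed
  show "net_inflow A head tail y v = net_inflow A head tail x v" for v
    unfolding y_def net_inflow_add_scaled[OF \<open>finite A\<close>] circulation by simp
  obtain a0 where "d a0 \<noteq> 0" "y a0 \<in> \<int>" using hit by (auto simp: y_def)
  moreover have "x a \<notin> \<int>" if "y a \<notin> \<int>" for a
    using that support[of a] by (cases "d a = 0") (auto simp: y_def)
  ultimately show "{a\<in>A. y a \<notin> \<int>} \<subset> {a\<in>A. x a \<notin> \<int>}"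
    using support by blast
qed

lemma integral_flow_no_costlier:
  fixes x :: "'a \<Rightarrow> real" and lo hi :: "'a \<Rightarrow> int" and c :: "'a \<Rightarrow> real \<Rightarrow> real"
  assumes "finite A"
    and "\<forall>a\<in>A. of_int (lo a) \<le> x a \<and> x a \<le> of_int (hi a)"
    and "\<forall>v. v \<noteq> r \<longrightarrow> net_inflow A head tail x v \<in> \<int>"
    and affine: "\<forall>a\<in>A. affine_on_unit_cells (c a)"
  shows "\<exists>x'. (\<forall>a\<in>A. x' a \<in> \<int> \<and> of_int (lo a) \<le> x' a \<and> x' a \<le> of_int (hi a))
     \<and> (\<forall>v. net_inflow A head tail x' v = net_inflow A head tail x v)
     \<and> (\<Sum>a\<in>A. c a (x' a)) \<le> (\<Sum>a\<in>A. c a (x a))"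
  using assms(2,3)
proof (induction "card {a\<in>A. x a \<notin> \<int>}" arbitrary: x rule: less_induct)
  case less
  define F where "F = {a\<in>A. x a \<notin> \<int>}"
  have "finite F" using \<open>finite A\<close> by (simp add: F_def)
  show ?case
  proof (cases "F = {}")
    case True
    then show ?thesis using less.prems by (intro exI[of _ x]) (auto simp: F_def)
  next
    case False
    \<comment> \<open>No vertex other than r meets exactly one fractional arc, so the fractional arcs carry a circulation.\<close>
    obtain d where d: "\<forall>a. a \<notin> F \<longrightarrow> d a = 0" "\<exists>a\<in>F. d a \<noteq> 0" "\<forall>v. net_inflow F head tail d v = 0"
      using nonzero_circulation_exists[OF \<open>finite F\<close> False, of r head tail]
        fractional_arcs_degree_ne_1[OF \<open>finite A\<close>, of head tail x, folded F_def] less.prems(2)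
      by blast
    define G where "G = {a. d a \<noteq> 0}"
    have support: "d a \<noteq> 0 \<Longrightarrow> a \<in> A \<and> x a \<notin> \<int>" for a
      using d(1) by (auto simp: F_def)
    have circulation: "net_inflow A head tail d v = 0" for v
      using net_inflow_restrict[OF \<open>finite A\<close> _ d(1)] d(3) unfolding F_def by (metis (no_types, lifting) mem_Collect_eq subsetI)
    have G: "finite G" "G \<noteq> {}" "\<And>a. a \<in> G \<Longrightarrow> x a \<notin> \<int> \<and> d a \<noteq> 0"
      using \<open>finite F\<close> d(1,2) support by (auto simp: G_def intro: finite_subset)
    \<comment> \<open>Moving along the circulation to the first integral value, in either direction, keeps x feasible
      and makes one more arc integral; by induction both endpoints round to integral flows.\<close>
    have round_shift: "\<exists>x'. (\<forall>a\<in>A. x' a \<in> \<int> \<and> of_int (lo a) \<le> x' a \<and> x' a \<le> of_int (hi a))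
       \<and> (\<forall>v. net_inflow A head tail x' v = net_inflow A head tail x v)
       \<and> (\<Sum>a\<in>A. c a (x' a)) \<le> (\<Sum>a\<in>A. c a (x a + s * d a))"
      if cell: "\<forall>a\<in>G. of_int \<lfloor>x a\<rfloor> \<le> x a + s * d a \<and> x a + s * d a \<le> of_int \<lfloor>x a\<rfloor> + 1"
        and hit: "\<exists>a\<in>G. x a + s * d a \<in> \<int>" for s
    proof -
      note shift = shift_along_circulation[OF \<open>finite A\<close> less.prems(1) support circulation, of s]
      have "card {a\<in>A. x a + s * d a \<notin> \<int>} < card {a\<in>A. x a \<notin> \<int>}"
        using shift(3) cell hit \<open>finite A\<close> by (intro psubset_card_mono) (auto simp: G_def)
      moreover have "\<forall>v. v \<noteq> r \<longrightarrow> net_inflow A head tail (\<lambda>a. x a + s * d a) v \<in> \<int>"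
        using shift(2) cell hit less.prems(2) by (simp add: G_def)
      ultimately show ?thesis
        using less.hyps[of "\<lambda>a. x a + s * d a"] shift(1,2) cell hit by (simp add: G_def)
    qed
    obtain s1 where s1: "s1 > 0" "\<forall>a\<in>G. of_int \<lfloor>x a\<rfloor> \<le> x a + s1 * d a \<and> x a + s1 * d a \<le> of_int \<lfloor>x a\<rfloor> + 1"
      "\<exists>a\<in>G. x a + s1 * d a \<in> \<int>"
      using exists_step_to_cell_boundary[OF G(1,2), of x d] G(3) by blast
    obtain s2 where s2: "s2 > 0" "\<forall>a\<in>G. of_int \<lfloor>x a\<rfloor> \<le> x a + (- s2) * d a \<and> x a + (- s2) * d a \<le> of_int \<lfloor>x a\<rfloor> + 1"
      "\<exists>a\<in>G. x a + (- s2) * d a \<in> \<int>"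
      using exists_step_to_cell_boundary[OF G(1,2), of x "\<lambda>a. - d a"] G(3) by auto
    obtain x1 where x1: "\<forall>a\<in>A. x1 a \<in> \<int> \<and> of_int (lo a) \<le> x1 a \<and> x1 a \<le> of_int (hi a)"
      "\<forall>v. net_inflow A head tail x1 v = net_inflow A head tail x v"
      "(\<Sum>a\<in>A. c a (x1 a)) \<le> (\<Sum>a\<in>A. c a (x a + s1 * d a))"
      using round_shift[OF s1(2,3)] by blast
    obtain x2 where x2: "\<forall>a\<in>A. x2 a \<in> \<int> \<and> of_int (lo a) \<le> x2 a \<and> x2 a \<le> of_int (hi a)"
      "\<forall>v. net_inflow A head tail x2 v = net_inflow A head tail x v"
      "(\<Sum>a\<in>A. c a (x2 a)) \<le> (\<Sum>a\<in>A. c a (x a + (- s2) * d a))"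
      using round_shift[OF s2(2,3)] by blast
    have "min (\<Sum>a\<in>A. c a (x a + s1 * d a)) (\<Sum>a\<in>A. c a (x a + (- s2) * d a)) \<le> (\<Sum>a\<in>A. c a (x a))"
      by (rule min_sum_affine_opposite_shifts_le[OF affine s1(1) s2(1)]) (use s1(2) s2(2) in \<open>auto simp: G_def\<close>)
    then have "(\<Sum>a\<in>A. c a (x1 a)) \<le> (\<Sum>a\<in>A. c a (x a)) \<or> (\<Sum>a\<in>A. c a (x2 a)) \<le> (\<Sum>a\<in>A. c a (x a))"
      using x1(3) x2(3) by linarith
    then show ?thesis using x1 x2 by blast
  qed
qed

section \<open>The second-stage problem as a flow problem\<close>

definition journey_index :: "nat \<Rightarrow> nat \<Rightarrow> ('n \<times> 'n) set \<Rightarrow> (int \<times> nat \<times> ('n \<times> 'n)) set" where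
  "journey_index T K E = {1..int T} \<times> {0..K} \<times> E"

text \<open>The time-expanded network: its vertices are Some (i, t) for station i and period t, plus None,
  the root, which absorbs every arc leaving the horizon. The journey Inl (t, k, (i, j)) runs from
  (i, t) to (j, t + k); the inventory arc Inr (i, t) carries the fill level of i at the end of
  period t to (i, t + 1). Prescribed journeys, loads and unloads enter as fixed integral supplies.\<close>

definition flow_arcs :: "'n set \<Rightarrow> ('n \<times> 'n) set \<Rightarrow> nat \<Rightarrow> nat \<Rightarrow> ((int \<times> nat \<times> ('n \<times> 'n)) + ('n \<times> int)) set" where
  "flow_arcs N E T K = Inl ` journey_index T K E \<union> Inr ` (N \<times> {1..int T})"

definition arc_head :: "nat \<Rightarrow> (int \<times> nat \<times> ('n \<times> 'n)) + ('n \<times> int) \<Rightarrow> ('n \<times> int) option" where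
  "arc_head T a = (case a of
      Inl (t, k, e) \<Rightarrow> if t + int k \<le> int T then Some (snd e, t + int k) else None
    | Inr (i, t) \<Rightarrow> if t < int T then Some (i, t + 1) else None)"

definition arc_tail :: "(int \<times> nat \<times> ('n \<times> 'n)) + ('n \<times> int) \<Rightarrow> ('n \<times> int) option" where
  "arc_tail a = (case a of Inl (t, k, e) \<Rightarrow> Some (fst e, t) | Inr (i, t) \<Rightarrow> Some (i, t))"

definition journey_balance :: "('n \<times> 'n) set \<Rightarrow> nat \<Rightarrow> (int \<Rightarrow> nat \<Rightarrow> 'n \<times> 'n \<Rightarrow> real) \<Rightarrow> 'n \<Rightarrow> int \<Rightarrow> real" where
  "journey_balance E K w i t =
     (\<Sum>k\<in>{0..K}. (if 1 \<le> t - int k then (\<Sum>j\<in>{j. (j, i) \<in> E}. w (t - int k) k (j, i)) else 0)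
       - (\<Sum>j\<in>{j. (i, j) \<in> E}. w t k (i, j)))"

definition fixed_inflow :: "('n \<times> 'n) set \<Rightarrow> nat \<Rightarrow> ('n \<Rightarrow> int \<Rightarrow> int) \<Rightarrow> ('n \<Rightarrow> int \<Rightarrow> int)
   \<Rightarrow> (int \<Rightarrow> nat \<Rightarrow> 'n \<times> 'n \<Rightarrow> int) \<Rightarrow> 'n \<Rightarrow> int \<Rightarrow> real" where
  "fixed_inflow E K yplus yminus w0 i t =
     (\<Sum>k\<in>{0..K}. if 1 \<le> t - int k then 0 else (\<Sum>j\<in>{j. (j, i) \<in> E}. real_of_int (w0 (t - int k) k (j, i))))
     + real_of_int (yminus i t) - real_of_int (yplus i t)"

definition arc_flow :: "('n \<times> 'n) set \<Rightarrow> nat \<Rightarrow> ('n \<Rightarrow> int) \<Rightarrow> ('n \<Rightarrow> int \<Rightarrow> int) \<Rightarrow> ('n \<Rightarrow> int \<Rightarrow> int)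
   \<Rightarrow> (int \<Rightarrow> nat \<Rightarrow> 'n \<times> 'n \<Rightarrow> int) \<Rightarrow> (int \<Rightarrow> nat \<Rightarrow> 'n \<times> 'n \<Rightarrow> real)
   \<Rightarrow> (int \<times> nat \<times> ('n \<times> 'n)) + ('n \<times> int) \<Rightarrow> real" where
  "arc_flow E K d0 yplus yminus w0 w a = (case a of
      Inl (t, k, e) \<Rightarrow> w t k e
    | Inr (i, t) \<Rightarrow> fill_level E K d0 yplus yminus w0 w i t)"

definition arc_loss :: "(int \<Rightarrow> nat \<Rightarrow> 'n \<times> 'n \<Rightarrow> real \<Rightarrow> real) \<Rightarrow> (int \<Rightarrow> nat \<Rightarrow> 'n \<times> 'n \<Rightarrow> nat)
   \<Rightarrow> (int \<times> nat \<times> ('n \<times> 'n)) + ('n \<times> int) \<Rightarrow> real \<Rightarrow> real" where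
  "arc_loss l f a = (case a of Inl (t, k, e) \<Rightarrow> (\<lambda>y. l t k e (real (f t k e) - y)) | Inr _ \<Rightarrow> (\<lambda>_. 0))"

lemma finite_flow_arcs: "finite N \<Longrightarrow> finite E \<Longrightarrow> finite (flow_arcs N E T K)"
  by (simp add: flow_arcs_def journey_index_def)

lemma flow_arcs_into:
  assumes "i \<in> N" "1 \<le> t" "t \<le> int T"
  shows "{a\<in>flow_arcs N E T K. arc_head T a = Some (i, t)} =
    Inl ` ((\<lambda>(k, j). (t - int k, k, (j, i))) ` ({k\<in>{0..K}. 1 \<le> t - int k} \<times> {j. (j, i) \<in> E}))
    \<union> Inr ` (if 2 \<le> t then {(i, t - 1)} else {})" (is "?L = ?R")
proof (rule set_eqI)
  fix a
  show "a \<in> ?L \<longleftrightarrow> a \<in> ?R"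
  proof (cases a)
    case (Inl b)
    obtain \<tau> k j i' where b: "b = (\<tau>, k, (j, i'))" by (metis prod.exhaust)
    show ?thesis
    proof
      assume "a \<in> ?L"
      then have "\<tau> \<in> {1..int T}" "k \<le> K" "(j, i') \<in> E" "i' = i" "\<tau> + int k = t"
        using Inl b by (auto simp: flow_arcs_def journey_index_def arc_head_def split: if_splits)
      then show "a \<in> ?R"
        using Inl b by (auto intro!: image_eqI[of _ _ "(k, j)"])
    qed (use Inl b assms in \<open>auto simp: flow_arcs_def journey_index_def arc_head_def\<close>)
  qed (use assms in \<open>auto simp: flow_arcs_def journey_index_def arc_head_def split: if_splits\<close>)
qed

lemma flow_arcs_out_of:
  assumes "i \<in> N" "1 \<le> t" "t \<le> int T"
  shows "{a\<in>flow_arcs N E T K. arc_tail a = Some (i, t)} =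
    Inl ` ((\<lambda>(k, j). (t, k, (i, j))) ` ({0..K} \<times> {j. (i, j) \<in> E})) \<union> {Inr (i, t)}" (is "?L = ?R")
proof (rule set_eqI)
  fix a
  show "a \<in> ?L \<longleftrightarrow> a \<in> ?R"
  proof (cases a)
    case (Inl b)
    obtain \<tau> k i' j where b: "b = (\<tau>, k, (i', j))" by (metis prod.exhaust)
    show ?thesis
    proof
      assume "a \<in> ?L"
      then have "k \<le> K" "(i', j) \<in> E" "i' = i" "\<tau> = t"
        using Inl b by (auto simp: flow_arcs_def journey_index_def arc_tail_def)
      then show "a \<in> ?R"
        using Inl b by (auto intro!: image_eqI[of _ _ "(k, j)"])
    qed (use Inl b assms in \<open>auto simp: flow_arcs_def journey_index_def arc_tail_def\<close>)
  qed (use assms in \<open>auto simp: flow_arcs_def journey_index_def arc_tail_def\<close>)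
qed

lemma net_inflow_flow_arcs:
  assumes "finite E" "i \<in> N" "1 \<le> t" "t \<le> int T"
  shows "net_inflow (flow_arcs N E T K) (arc_head T) arc_tail z (Some (i, t))
    = journey_balance E K (\<lambda>t k e. z (Inl (t, k, e))) i t
      + (if 2 \<le> t then z (Inr (i, t - 1)) else 0) - z (Inr (i, t))"
proof -
  have finite_pred: "finite {j. (j, i) \<in> E}"
    by (rule finite_subset[of _ "fst ` E"]) (use \<open>finite E\<close> in force)+
  have finite_succ: "finite {j. (i, j) \<in> E}"
    by (rule finite_subset[of _ "snd ` E"]) (use \<open>finite E\<close> in force)+
  define S1 where "S1 = {k\<in>{0..K}. 1 \<le> t - int k} \<times> {j. (j, i) \<in> E}"
  define g1 where "g1 = (\<lambda>(k::nat, j::'a). (t - int k, k, (j, i)))"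
  define S2 where "S2 = {0..K} \<times> {j. (i, j) \<in> E}"
  define g2 where "g2 = (\<lambda>(k::nat, j::'a). (t, k, (i, j)))"
  have "inj_on g1 S1" "inj_on g2 S2" by (auto simp: inj_on_def g1_def g2_def)
  have "finite S1" "finite S2" using finite_pred finite_succ by (simp_all add: S1_def S2_def)
  have "(\<Sum>a\<in>{a\<in>flow_arcs N E T K. arc_head T a = Some (i, t)}. z a)
      = (\<Sum>a\<in>Inl ` (g1 ` S1). z a) + (\<Sum>a\<in>Inr ` (if 2 \<le> t then {(i, t - 1)} else {}). z a)"
    unfolding flow_arcs_into[OF assms(2-4)] g1_def[symmetric] S1_def[symmetric]
    by (rule sum.union_disjoint) (auto simp: \<open>finite S1\<close>)
  also have "(\<Sum>a\<in>Inl ` (g1 ` S1). z a) = (\<Sum>p\<in>S1. z (Inl (g1 p)))"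
    by (simp add: sum.reindex \<open>inj_on g1 S1\<close>)
  also have "\<dots> = (\<Sum>k\<in>{k\<in>{0..K}. 1 \<le> t - int k}. \<Sum>j\<in>{j. (j, i) \<in> E}. z (Inl (t - int k, k, (j, i))))"
    unfolding S1_def g1_def by (simp add: sum.cartesian_product split_def)
  also have "\<dots> = (\<Sum>k\<in>{0..K}. if 1 \<le> t - int k then (\<Sum>j\<in>{j. (j, i) \<in> E}. z (Inl (t - int k, k, (j, i)))) else 0)"
    by (rule sum.inter_filter) simp
  finally have into: "(\<Sum>a\<in>{a\<in>flow_arcs N E T K. arc_head T a = Some (i, t)}. z a)
      = (\<Sum>k\<in>{0..K}. if 1 \<le> t - int k then (\<Sum>j\<in>{j. (j, i) \<in> E}. z (Inl (t - int k, k, (j, i)))) else 0)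
        + (if 2 \<le> t then z (Inr (i, t - 1)) else 0)"
    by simp
  have "(\<Sum>a\<in>{a\<in>flow_arcs N E T K. arc_tail a = Some (i, t)}. z a)
      = (\<Sum>a\<in>Inl ` (g2 ` S2). z a) + (\<Sum>a\<in>{Inr (i, t)}. z a)"
    unfolding flow_arcs_out_of[OF assms(2-4)] g2_def[symmetric] S2_def[symmetric]
    by (rule sum.union_disjoint) (auto simp: \<open>finite S2\<close>)
  also have "(\<Sum>a\<in>Inl ` (g2 ` S2). z a) = (\<Sum>p\<in>S2. z (Inl (g2 p)))"
    by (simp add: sum.reindex \<open>inj_on g2 S2\<close>)
  also have "\<dots> = (\<Sum>k\<in>{0..K}. \<Sum>j\<in>{j. (i, j) \<in> E}. z (Inl (t, k, (i, j))))"
    unfolding S2_def g2_def by (simp add: sum.cartesian_product split_def)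
  finally have out_of: "(\<Sum>a\<in>{a\<in>flow_arcs N E T K. arc_tail a = Some (i, t)}. z a)
      = (\<Sum>k\<in>{0..K}. \<Sum>j\<in>{j. (i, j) \<in> E}. z (Inl (t, k, (i, j)))) + z (Inr (i, t))"
    by simp
  show ?thesis unfolding net_inflow_def into out_of journey_balance_def sum_subtractf by simp
qed

lemma net_inflow_flow_arcs_outside:
  assumes "E \<subseteq> N \<times> N" "\<not> (i \<in> N \<and> 1 \<le> t \<and> t \<le> int T)"
  shows "net_inflow (flow_arcs N E T K) (arc_head T) arc_tail z (Some (i, t)) = 0"
proof -
  have "{a\<in>flow_arcs N E T K. arc_head T a = Some (i, t)} = {}"
    using assms by (auto simp: flow_arcs_def journey_index_def arc_head_def split: if_splits)
  moreover have "{a\<in>flow_arcs N E T K. arc_tail a = Some (i, t)} = {}"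
    using assms by (auto simp: flow_arcs_def journey_index_def arc_tail_def)
  ultimately show ?thesis unfolding net_inflow_def by (simp only: sum.empty diff_self)
qed

lemma fixed_inflow_integral: "fixed_inflow E K yplus yminus w0 i t \<in> \<int>"
  unfolding fixed_inflow_def by (intro Ints_add Ints_diff Ints_sum) auto

lemma fill_level_0: "fill_level E K d0 yplus yminus w0 w i 0 = real_of_int (d0 i)"
  by (simp add: fill_level_def)

lemma fill_level_step:
  assumes "1 \<le> t"
  shows "fill_level E K d0 yplus yminus w0 w i t = fill_level E K d0 yplus yminus w0 w i (t - 1)
     + journey_balance E K w i t + fixed_inflow E K yplus yminus w0 i t"
proof -
  have "(\<Sum>j\<in>{j. (j, i) \<in> E}. journey w0 w (t - int k) k (j, i)) =
     (if 1 \<le> t - int k then (\<Sum>j\<in>{j. (j, i) \<in> E}. w (t - int k) k (j, i)) else 0)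
     + (if 1 \<le> t - int k then 0 else (\<Sum>j\<in>{j. (j, i) \<in> E}. real_of_int (w0 (t - int k) k (j, i))))" for k
    by (simp add: journey_def)
  then have step: "(\<Sum>k\<in>{0..K}. (\<Sum>j\<in>{j. (j, i) \<in> E}. journey w0 w (t - int k) k (j, i)) - (\<Sum>j\<in>{j. (i, j) \<in> E}. w t k (i, j)))
     + real_of_int (yminus i t) - real_of_int (yplus i t) = journey_balance E K w i t + fixed_inflow E K yplus yminus w0 i t"
    unfolding journey_balance_def fixed_inflow_def by (simp add: sum.distrib sum_subtractf algebra_simps)
  have "{1..t} = insert t {1..t - 1}" using assms by auto
  then show ?thesis
    unfolding fill_level_def using step by (simp only:) (subst sum.insert; simp)
qed

lemma net_inflow_arc_flow:
  assumes "finite E" "i \<in> N" "1 \<le> t" "t \<le> int T"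
  shows "net_inflow (flow_arcs N E T K) (arc_head T) arc_tail (arc_flow E K d0 yplus yminus w0 w) (Some (i, t))
     = (if 2 \<le> t then 0 else - real_of_int (d0 i)) - fixed_inflow E K yplus yminus w0 i t"
proof -
  let ?fill = "fill_level E K d0 yplus yminus w0 w i"
  have "journey_balance E K (\<lambda>t k e. arc_flow E K d0 yplus yminus w0 w (Inl (t, k, e))) i t = journey_balance E K w i t"
    by (simp add: arc_flow_def)
  then have "net_inflow (flow_arcs N E T K) (arc_head T) arc_tail (arc_flow E K d0 yplus yminus w0 w) (Some (i, t))
      = journey_balance E K w i t + (if 2 \<le> t then ?fill (t - 1) else 0) - ?fill t"
    using net_inflow_flow_arcs[OF assms, of K "arc_flow E K d0 yplus yminus w0 w"] by (simp add: arc_flow_def)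
  moreover have "?fill t = ?fill (t - 1) + journey_balance E K w i t + fixed_inflow E K yplus yminus w0 i t"
    by (rule fill_level_step[OF assms(3)])
  moreover have "\<not> 2 \<le> t \<Longrightarrow> t - 1 = 0" using assms(3) by simp
  then have "\<not> 2 \<le> t \<Longrightarrow> ?fill (t - 1) = real_of_int (d0 i)"
    by (simp add: fill_level_0)
  ultimately show ?thesis by (cases "2 \<le> t") simp_all
qed

lemma net_inflow_arc_flow_integral:
  assumes "finite E" "E \<subseteq> N \<times> N" "v \<noteq> None"
  shows "net_inflow (flow_arcs N E T K) (arc_head T) arc_tail (arc_flow E K d0 yplus yminus w0 w) v \<in> \<int>"
proof -
  obtain i t where v: "v = Some (i, t)" using assms(3) by auto
  show ?thesis
  proof (cases "i \<in> N \<and> 1 \<le> t \<and> t \<le> int T")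
    case True
    then have "net_inflow (flow_arcs N E T K) (arc_head T) arc_tail (arc_flow E K d0 yplus yminus w0 w) v
      = (if 2 \<le> t then 0 else - real_of_int (d0 i)) - fixed_inflow E K yplus yminus w0 i t"
      unfolding v by (intro net_inflow_arc_flow[OF assms(1)]) auto
    moreover have "(if 2 \<le> t then 0 else - real_of_int (d0 i)) \<in> \<int>" by simp
    ultimately show ?thesis
      using fixed_inflow_integral by (metis Ints_diff)
  next
    case False
    then show ?thesis unfolding v using net_inflow_flow_arcs_outside[OF assms(2) False] by simp
  qed
qed

lemma journey_balance_cong:
  assumes "\<forall>\<tau> k e. (\<tau>, k, e) \<in> journey_index T K E \<longrightarrow> w1 \<tau> k e = w2 \<tau> k e" "1 \<le> t" "t \<le> int T"
  shows "journey_balance E K w1 i t = journey_balance E K w2 i t"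
  unfolding journey_balance_def
proof (intro sum.cong refl arg_cong2[where f = "(-)"] if_cong)
  fix k j assume "k \<in> {0..K}" "1 \<le> t - int k" "j \<in> {j. (j, i) \<in> E}"
  then show "w1 (t - int k) k (j, i) = w2 (t - int k) k (j, i)" using assms by (auto simp: journey_index_def)
next
  fix k j assume "k \<in> {0..K}" "j \<in> {j. (i, j) \<in> E}"
  then show "w1 t k (i, j) = w2 t k (i, j)" using assms by (auto simp: journey_index_def)
qed

lemma fill_level_eq_inventory:
  assumes "finite E" "i \<in> N"
    and same_inflow: "\<And>v. net_inflow (flow_arcs N E T K) (arc_head T) arc_tail z v
       = net_inflow (flow_arcs N E T K) (arc_head T) arc_tail (arc_flow E K d0 yplus yminus w0 w) v"
    and journeys: "\<forall>\<tau> k e. (\<tau>, k, e) \<in> journey_index T K E \<longrightarrow> w' \<tau> k e = z (Inl (\<tau>, k, e))"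
    and "1 \<le> t" "t \<le> int T"
  shows "fill_level E K d0 yplus yminus w0 w' i t = z (Inr (i, t))"
  using assms(5,6)
proof (induction t rule: int_ge_induct)
  case base
  then show ?case
    using net_inflow_flow_arcs[OF assms(1,2), of 1 T K z] net_inflow_arc_flow[OF assms(1,2), of 1 T K d0 yplus yminus w0 w]
      same_inflow fill_level_step[of 1 E K d0 yplus yminus w0 w' i]
      journey_balance_cong[OF journeys, of 1 i]
    by (simp add: fill_level_0)
next
  case (step t)
  then have "1 \<le> t + 1" "t + 1 \<le> int T" "2 \<le> t + 1" by simp_all
  then show ?case
    using net_inflow_flow_arcs[OF assms(1,2), of "t + 1" T K z] net_inflow_arc_flow[OF assms(1,2), of "t + 1" T K d0 yplus yminus w0 w]
      same_inflow fill_level_step[of "t + 1" E K d0 yplus yminus w0 w' i] step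
      journey_balance_cong[OF journeys, of "t + 1" i]
    by simp
qed

lemma objective_eq_sum_arc_loss:
  assumes "finite N" "finite E" "\<forall>t k e. (t, k, e) \<in> journey_index T K E \<longrightarrow> z (Inl (t, k, e)) = w t k e"
  shows "(\<Sum>a\<in>flow_arcs N E T K. arc_loss l f a (z a)) = objective E T K l f w"
proof -
  have "(\<Sum>a\<in>flow_arcs N E T K. arc_loss l f a (z a))
      = (\<Sum>a\<in>Inl ` journey_index T K E. arc_loss l f a (z a)) + (\<Sum>a\<in>Inr ` (N \<times> {1..int T}). arc_loss l f a (z a))"
    unfolding flow_arcs_def using assms(1,2) by (intro sum.union_disjoint) (auto simp: journey_index_def)
  also have "(\<Sum>a\<in>Inr ` (N \<times> {1..int T}). arc_loss l f a (z a)) = 0"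
    by (rule sum.neutral) (auto simp: arc_loss_def)
  also have "(\<Sum>a\<in>Inl ` journey_index T K E. arc_loss l f a (z a))
      = (\<Sum>p\<in>journey_index T K E. arc_loss l f (Inl p) (z (Inl p)))"
    by (simp add: sum.reindex)
  also have "\<dots> = (\<Sum>(t, k, e)\<in>journey_index T K E. l t k e (real (f t k e) - w t k e))"
    by (rule sum.cong) (use assms(3) in \<open>auto simp: arc_loss_def\<close>)
  also have "\<dots> = (\<Sum>t\<in>{1..int T}. \<Sum>k\<in>{0..K}. \<Sum>e\<in>E. l t k e (real (f t k e) - w t k e))"
    unfolding journey_index_def by (simp add: sum.cartesian_product split_def)
  also have "\<dots> = objective E T K l f w"
    unfolding objective_def by (intro sum.cong refl) (rule sum.swap)
  finally show ?thesis by simp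
qed

lemma arc_loss_affine_on_unit_cells:
  assumes "\<And>t k e. cvx_pwa_int (l t k e)"
  shows "affine_on_unit_cells (arc_loss l f a)"
proof (cases a)
  case (Inl p)
  then show ?thesis
    using affine_on_unit_cells_reflect[OF cvx_pwa_int_imp_affine_on_unit_cells[OF assms]]
    by (auto simp: arc_loss_def split: prod.splits)
qed (simp add: arc_loss_def affine_on_unit_cells_def split: sum.splits prod.splits)

lemma integral_feasible_no_costlier:
  assumes "finite N" "E \<subseteq> N \<times> N" "\<And>t k e. cvx_pwa_int (l t k e)"
    and feasible: "feasible_relaxed N E T K d0 dbar yplus yminus f w0 w"
  shows "\<exists>w'. feasible_relaxed N E T K d0 dbar yplus yminus f w0 w'
     \<and> (\<forall>t k e. (t, k, e) \<in> journey_index T K E \<longrightarrow> w' t k e \<in> \<int>)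
     \<and> (\<forall>t k e. (t, k, e) \<notin> journey_index T K E \<longrightarrow> w' t k e = 0)
     \<and> objective E T K l f w' \<le> objective E T K l f w"
proof -
  have "finite E" using assms(1,2) finite_subset by blast
  let ?A = "flow_arcs N E T K"
  define x where "x = arc_flow E K d0 yplus yminus w0 w"
  define hi where "hi a = (case a of Inl (t, k, e) \<Rightarrow> int (f t k e) | Inr (i, _ :: int) \<Rightarrow> dbar i)" for a
  have bounds: "\<forall>a\<in>?A. of_int 0 \<le> x a \<and> x a \<le> of_int (hi a)"
    using feasible by (auto simp: flow_arcs_def journey_index_def x_def arc_flow_def hi_def feasible_relaxed_def)
  have integral: "\<forall>v. v \<noteq> None \<longrightarrow> net_inflow ?A (arc_head T) arc_tail x v \<in> \<int>"
    using net_inflow_arc_flow_integral[OF \<open>finite E\<close> assms(2)] by (simp add: x_def)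
  have affine: "\<forall>a\<in>?A. affine_on_unit_cells (arc_loss l f a)"
    using arc_loss_affine_on_unit_cells assms(3) by blast
  obtain z where z:
      "\<forall>a\<in>?A. z a \<in> \<int> \<and> of_int 0 \<le> z a \<and> z a \<le> of_int (hi a)"
      "\<forall>v. net_inflow ?A (arc_head T) arc_tail z v = net_inflow ?A (arc_head T) arc_tail x v"
      "(\<Sum>a\<in>?A. arc_loss l f a (z a)) \<le> (\<Sum>a\<in>?A. arc_loss l f a (x a))"
    using integral_flow_no_costlier[OF finite_flow_arcs[OF assms(1) \<open>finite E\<close>] bounds integral affine] by blast
  define w' where "w' t k e = (if (t, k, e) \<in> journey_index T K E then z (Inl (t, k, e)) else 0)" for t k e
  have journeys: "(t, k, e) \<in> journey_index T K E \<Longrightarrow> Inl (t, k, e) \<in> ?A" for t k e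
    by (simp add: flow_arcs_def)
  have fill: "fill_level E K d0 yplus yminus w0 w' i t = z (Inr (i, t))" if "i \<in> N" "t \<in> {1..int T}" for i t
    using fill_level_eq_inventory[OF \<open>finite E\<close> that(1), of T K z d0 yplus yminus w0 w w' t] z(2) that(2)
    by (simp add: x_def w'_def)
  have "feasible_relaxed N E T K d0 dbar yplus yminus f w0 w'"
    unfolding feasible_relaxed_def
  proof (intro conjI ballI)
    fix t i assume "t \<in> {1..int T}" "i \<in> N"
    moreover from this have "Inr (i, t) \<in> ?A" by (simp add: flow_arcs_def)
    ultimately show "0 \<le> fill_level E K d0 yplus yminus w0 w' i t"
      "fill_level E K d0 yplus yminus w0 w' i t \<le> real_of_int (dbar i)"
      using z(1) fill by (auto simp: hi_def)
  next
    fix t k e assume "t \<in> {1..int T}" "k \<in> {0..K}" "e \<in> E"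
    then have "(t, k, e) \<in> journey_index T K E" by (simp add: journey_index_def)
    moreover from this have "Inl (t, k, e) \<in> ?A" by (rule journeys)
    ultimately show "0 \<le> w' t k e" "w' t k e \<le> real (f t k e)"
      using z(1) by (auto simp: w'_def hi_def)
  qed
  moreover have "objective E T K l f w' \<le> objective E T K l f w"
    using z(3) objective_eq_sum_arc_loss[OF assms(1) \<open>finite E\<close>, of T K z w' l f]
      objective_eq_sum_arc_loss[OF assms(1) \<open>finite E\<close>, of T K x w l f]
    by (simp add: w'_def x_def arc_flow_def)
  ultimately show ?thesis
    using z(1) journeys by (intro exI[of _ w']) (auto simp: w'_def)
qed

lemma ex_min_if_finite_dominating:
  fixes g :: "'a \<Rightarrow> 'b::linorder"
  assumes "finite C" "\<exists>x. P x" "\<And>x. P x \<Longrightarrow> \<exists>y\<in>C. P y \<and> g y \<le> g x"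
  shows "\<exists>y\<in>C. P y \<and> (\<forall>x. P x \<longrightarrow> g y \<le> g x)"
proof -
  define C' where "C' = {y\<in>C. P y}"
  have "finite C'" "C' \<noteq> {}" using assms by (auto simp: C'_def)
  then have "Min (g ` C') \<in> g ` C'" by (intro Min_in) auto
  then obtain y where y: "y \<in> C'" "g y = Min (g ` C')" by auto
  have "g y \<le> g x" if x: "P x" for x
  proof -
    obtain y' where "y' \<in> C'" "g y' \<le> g x" using assms(3)[OF x] by (auto simp: C'_def)
    with y \<open>finite C'\<close> show ?thesis by (metis Min_le finite_imageI image_eqI order_trans)
  qed
  with y(1) show ?thesis by (auto simp: C'_def)
qed

lemma finite_integral_bounded_journeys:
  fixes f :: "int \<Rightarrow> nat \<Rightarrow> 'e \<Rightarrow> nat"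
  assumes "finite D"
  shows "finite {w :: int \<Rightarrow> nat \<Rightarrow> 'e \<Rightarrow> real. \<forall>t k e.
     ((t, k, e) \<in> D \<longrightarrow> w t k e \<in> \<int> \<and> 0 \<le> w t k e \<and> w t k e \<le> real (f t k e))
     \<and> ((t, k, e) \<notin> D \<longrightarrow> w t k e = 0)}" (is "finite ?W")
proof -
  define M where "M = (\<Sum>(t, k, e)\<in>D. f t k e)"
  define G where "G = {g. \<forall>p. (p \<in> D \<longrightarrow> g p \<in> real ` {..M}) \<and> (p \<notin> D \<longrightarrow> g p = 0)}"
  have "?W \<subseteq> (\<lambda>g t k e. g (t, k, e)) ` G"
  proof
    fix w assume w: "w \<in> ?W"
    have "w t k e \<in> real ` {..M}" if "(t, k, e) \<in> D" for t k e
    proof -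
      from w that have "w t k e \<in> \<int>" "0 \<le> w t k e" "w t k e \<le> real (f t k e)" by auto
      then obtain n where n: "w t k e = of_int n" "0 \<le> n" "n \<le> int (f t k e)"
        by (auto elim!: Ints_cases)
      have "f t k e \<le> M"
        unfolding M_def using member_le_sum[OF that, of "\<lambda>(t, k, e). f t k e"] assms by simp
      with n have "nat n \<in> {..M}" "w t k e = real (nat n)" by simp_all
      then show ?thesis by blast
    qed
    with w have "(\<lambda>(t, k, e). w t k e) \<in> G" by (auto simp: G_def)
    then show "w \<in> (\<lambda>g t k e. g (t, k, e)) ` G" by (rule rev_image_eqI) simp
  qed
  moreover have "finite G"
    unfolding G_def using assms by (intro finite_set_of_finite_funs) simp_all
  ultimately show ?thesis by (rule finite_subset[OF _ finite_imageI])
qed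

theorem proposition1:
  fixes N :: "'n set" and E :: "('n \<times> 'n) set" and T K :: nat
    and d0 dbar :: "'n \<Rightarrow> int"
    and yplus yminus :: "'n \<Rightarrow> int \<Rightarrow> int"
    and f :: "int \<Rightarrow> nat \<Rightarrow> 'n \<times> 'n \<Rightarrow> nat"
    and w0 :: "int \<Rightarrow> nat \<Rightarrow> 'n \<times> 'n \<Rightarrow> int"
    and l :: "int \<Rightarrow> nat \<Rightarrow> 'n \<times> 'n \<Rightarrow> real \<Rightarrow> real"
  assumes "finite N" and "E \<subseteq> N \<times> N"
    and "\<And>t k e. cvx_pwa_int (l t k e)"
    and "\<exists>w. feasible_relaxed N E T K d0 dbar yplus yminus f w0 w"
  shows "\<exists>w. feasible_relaxed N E T K d0 dbar yplus yminus f w0 w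
           \<and> (\<forall>t\<in>{1..int T}. \<forall>k\<in>{0..K}. \<forall>e\<in>E. w t k e \<in> \<int>)
           \<and> (\<forall>w'. feasible_relaxed N E T K d0 dbar yplus yminus f w0 w'
                   \<longrightarrow> objective E T K l f w \<le> objective E T K l f w')"
proof -
  let ?D = "journey_index T K E"
  let ?feasible = "feasible_relaxed N E T K d0 dbar yplus yminus f w0"
  define C where "C = {w :: int \<Rightarrow> nat \<Rightarrow> 'n \<times> 'n \<Rightarrow> real. \<forall>t k e.
     ((t, k, e) \<in> ?D \<longrightarrow> w t k e \<in> \<int> \<and> 0 \<le> w t k e \<and> w t k e \<le> real (f t k e))
     \<and> ((t, k, e) \<notin> ?D \<longrightarrow> w t k e = 0)}"
  have "finite E" using assms(1,2) finite_subset by blast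
  then have finite_C: "finite C"
    unfolding C_def by (intro finite_integral_bounded_journeys) (simp add: journey_index_def)
  have dominated: "\<exists>w'\<in>C. ?feasible w' \<and> objective E T K l f w' \<le> objective E T K l f w" if w: "?feasible w" for w
  proof -
    obtain w' where w': "?feasible w'" "\<forall>t k e. (t, k, e) \<in> ?D \<longrightarrow> w' t k e \<in> \<int>"
      "\<forall>t k e. (t, k, e) \<notin> ?D \<longrightarrow> w' t k e = 0" "objective E T K l f w' \<le> objective E T K l f w"
      using integral_feasible_no_costlier[where l = l, OF assms(1-3) w] by blast
    from w'(1) have "\<forall>t k e. (t, k, e) \<in> ?D \<longrightarrow> 0 \<le> w' t k e \<and> w' t k e \<le> real (f t k e)"
      by (auto simp: feasible_relaxed_def journey_index_def)
    with w'(2,3) have "w' \<in> C" by (simp add: C_def)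
    with w'(1,4) show ?thesis by blast
  qed
  obtain w where "w \<in> C" "?feasible w" "\<forall>w'. ?feasible w' \<longrightarrow> objective E T K l f w \<le> objective E T K l f w'"
    using ex_min_if_finite_dominating[OF finite_C assms(4) dominated] by blast
  moreover from \<open>w \<in> C\<close> have "\<forall>t\<in>{1..int T}. \<forall>k\<in>{0..K}. \<forall>e\<in>E. w t k e \<in> \<int>"
    by (auto simp: C_def journey_index_def)
  ultimately show ?thesis by blast
qed

end
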